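(* Let $n\ge3$ and $0<q<1$. For every relationship network $G$ on $V$, $P_D(G)\le 1-(1-q)^2$. Consequently, if every agent $j$ satisfies one of: $|F_j|\ge2$; or $F_j=\varnothing$ and $|I_j|\ge2$; or $E_j=V\setminus\{j\}$, then $P_R(G)\ge P_D(G)$.
   Context: Let $V=\{1,\dots,n\}$. A relationship network $G$ assigns to every unordered pair of distinct agents exactly one of the symmetric relations friends, enemies, impartial; $F_j,E_j,I_j$ are the friends, enemies, impartials of $j$. Each agent is needy independently with probability $q$; $N$ is the random needy set; every agent $j$ reports truthfully $(N,F_j,E_j)$. Random dictatorship $g^R$: for agent $j$, choice set $C_j$: if $F_j\ne\varnothing$, $C_j=F_j\cap N$ if nonempty, else $F_j$; if $F_j=\varnothing\ne I_j$, $C_j=I_j\cap N$ if nonempty, else $I_j$; otherwise $C_j=E_j\cap N$ if nonempty, else $E_j$. $g^R_i=\frac1n\sum_{j\ne i}\mathbf 1[i\in C_j]/|C_j|$. Duples $g^D$: for agent $l$ and $j\ne l$, $\mathrm{lev}_l(j)=1,\dots,6$ according as $j\in F_l\cap N$, $F_l\setminus N$, $I_l\cap N$, $I_l\setminus N$, $E_l\cap N$, $E_l\setminus N$. For distinct $j,k$, agent $l\notin\{j,k\}$ votes for $j$ against $k$ if $\mathrm{lev}_l(j)<\mathrm{lev}_l(k)$; $x_{jk}$ counts these votes. $g^D_j(\{j,k\})=1,\tfrac12,0$ as $x_{jk}>,=,<x_{kj}$, $g^D_k(\{j,k\})=1-g^D_j(\{j,k\})$, and $g^D_i=\frac{2}{n(n-1)}\sum_{j\ne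 i}g^D_i(\{i,j\})$. $P_R(G)$ and $P_D(G)$ denote the probabilities that $g^R$, resp. $g^D$, select a needy agent, i.e. $\mathbb E[\sum_{i\in N}g_i]$ under truthful reports. *)

theory Defs
  imports Complex_Main
begin

text \<open>Agents are V = {1..n}. A relationship network assigns to each ordered pair
  a relation; it must be symmetric on distinct agents of V (values on the diagonal
  or outside V are irrelevant).\<close>

datatype relation = Friends | Enemies | Impartial

definition agents :: "nat \<Rightarrow> nat set" where
  "agents n = {1..n}"

definition network :: "nat \<Rightarrow> (nat \<Rightarrow> nat \<Rightarrow> relation) \<Rightarrow> bool" where
  "network n G \<longleftrightarrow> (\<forall>i\<in>agents n. \<forall>j\<in>agents n. i \<noteq> j \<longrightarrow> G i j = G j i)"

definition Fr :: "nat \<Rightarrow> (nat \<Rightarrow> nat \<Rightarrow> relation) \<Rightarrow> nat \<Rightarrow> nat set" where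
  "Fr n G j = {i \<in> agents n. i \<noteq> j \<and> G j i = Friends}"

definition En :: "nat \<Rightarrow> (nat \<Rightarrow> nat \<Rightarrow> relation) \<Rightarrow> nat \<Rightarrow> nat set" where
  "En n G j = {i \<in> agents n. i \<noteq> j \<and> G j i = Enemies}"

definition Im :: "nat \<Rightarrow> (nat \<Rightarrow> nat \<Rightarrow> relation) \<Rightarrow> nat \<Rightarrow> nat set" where
  "Im n G j = {i \<in> agents n. i \<noteq> j \<and> G j i = Impartial}"

definition choice_set :: "nat \<Rightarrow> (nat \<Rightarrow> nat \<Rightarrow> relation) \<Rightarrow> nat set \<Rightarrow> nat \<Rightarrow> nat set" where
  "choice_set n G N j =
    (let F = Fr n G j; I = Im n G j; E = En n G j in
     if F \<noteq> {} then (if F \<inter> N \<noteq> {} then F \<inter> N else F)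
     else if I \<noteq> {} then (if I \<inter> N \<noteq> {} then I \<inter> N else I)
     else (if E \<inter> N \<noteq> {} then E \<inter> N else E))"

definition gR :: "nat \<Rightarrow> (nat \<Rightarrow> nat \<Rightarrow> relation) \<Rightarrow> nat set \<Rightarrow> nat \<Rightarrow> real" where
  "gR n G N i = (1 / real n) *
     (\<Sum>j \<in> agents n - {i}. if i \<in> choice_set n G N j
                              then 1 / real (card (choice_set n G N j)) else 0)"

definition lev :: "nat \<Rightarrow> (nat \<Rightarrow> nat \<Rightarrow> relation) \<Rightarrow> nat set \<Rightarrow> nat \<Rightarrow> nat \<Rightarrow> nat" where
  "lev n G N l j =
    (if j \<in> Fr n G l \<inter> N then 1
     else if j \<in> Fr n G l - N then 2
     else if j \<in> Im n G l \<inter> N then 3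
     else if j \<in> Im n G l - N then 4
     else if j \<in> En n G l \<inter> N then 5
     else 6)"

definition votes :: "nat \<Rightarrow> (nat \<Rightarrow> nat \<Rightarrow> relation) \<Rightarrow> nat set \<Rightarrow> nat \<Rightarrow> nat \<Rightarrow> nat" where
  "votes n G N j k = card {l \<in> agents n. l \<noteq> j \<and> l \<noteq> k \<and> lev n G N l j < lev n G N l k}"

definition gpair :: "nat \<Rightarrow> (nat \<Rightarrow> nat \<Rightarrow> relation) \<Rightarrow> nat set \<Rightarrow> nat \<Rightarrow> nat \<Rightarrow> real" where
  "gpair n G N j k =
    (if votes n G N j k > votes n G N k j then 1
     else if votes n G N j k = votes n G N k j then 1/2 else 0)"

definition gD :: "nat \<Rightarrow> (nat \<Rightarrow> nat \<Rightarrow> relation) \<Rightarrow> nat set \<Rightarrow> nat \<Rightarrow> real" where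
  "gD n G N i = (2 / (real n * (real n - 1))) * (\<Sum>j \<in> agents n - {i}. gpair n G N i j)"

text \<open>Probability that mechanism g selects a needy agent: expectation over the
  random needy set N (each agent needy independently with probability q).\<close>
definition Pneedy :: "nat \<Rightarrow> real \<Rightarrow> (nat set \<Rightarrow> nat \<Rightarrow> real) \<Rightarrow> real" where
  "Pneedy n q g = (\<Sum>N \<in> Pow (agents n).
      q ^ card N * (1 - q) ^ (n - card N) * (\<Sum>i \<in> N. g N i))"

definition PR :: "nat \<Rightarrow> real \<Rightarrow> (nat \<Rightarrow> nat \<Rightarrow> relation) \<Rightarrow> real" where
  "PR n q G = Pneedy n q (gR n G)"

definition PD :: "nat \<Rightarrow> real \<Rightarrow> (nat \<Rightarrow> nat \<Rightarrow> relation) \<Rightarrow> real" where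
  "PD n q G = Pneedy n q (gD n G)"

end

theory Submission
  imports Defs
begin

(* Under duples each unordered pair {i, j} of agents distributes total weight 1, so its
   needy members together receive at most 1, and nothing when neither is needy. Averaging
   over all pairs bounds P_D by 1 - (1 - q)^2, the probability that a fixed pair contains a
   needy agent. Under random dictatorship agent j selects a needy agent whenever the first
   nonempty class among its friends, impartials and enemies contains one. Under the
   hypothesis this class has at least two members, so it contains a needy agent with
   probability at least 1 - (1 - q)^2. *)

definition subset_weight :: "'a::comm_ring_1 \<Rightarrow> 'b set \<Rightarrow> 'b set \<Rightarrow> 'a" where
  "subset_weight q A N = q ^ card N * (1 - q) ^ (card A - card N)"

lemma subset_weight_nonneg:
  fixes q :: "'a::linordered_idom"
  shows "0 \<le> q \<Longrightarrow> q \<le> 1 \<Longrightarrow> 0 \<le> subset_weight q A N"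
  by (simp add: subset_weight_def)

lemma sum_subset_weight_avoiding:
  assumes fin: "finite A" and "T \<subseteq> A"
  shows "(\<Sum>N\<in>Pow A. subset_weight q A N * of_bool (N \<inter> T = {})) = (1 - q) ^ card T"
proof -
  let ?f = "\<lambda>x. if x \<in> T then 0 else q"
  have "(1 - q) ^ card T = (\<Prod>x\<in>A. if x \<in> T then 1 - q else 1)"
    using fin \<open>T \<subseteq> A\<close> by (simp add: prod.If_cases Int_absorb1)
  also have "\<dots> = (\<Prod>x\<in>A. ?f x + (1 - q))"
    by (rule prod.cong) auto
  also have "\<dots> = (\<Sum>N\<in>Pow A. (\<Prod>x\<in>N. ?f x) * (\<Prod>x\<in>A - N. 1 - q))"
    by (rule prod_add[OF fin])
  also have "\<dots> = (\<Sum>N\<in>Pow A. subset_weight q A N * of_bool (N \<inter> T = {}))"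
  proof (rule sum.cong[OF refl])
    fix N assume "N \<in> Pow A"
    then have "finite N"
      using fin by (auto intro: finite_subset)
    then have "card (A - N) = card A - card N"
      using \<open>N \<in> Pow A\<close> by (simp add: card_Diff_subset)
    moreover have "(\<Prod>x\<in>N. ?f x) = q ^ card N * of_bool (N \<inter> T = {})"
    proof (cases "N \<inter> T = {}")
      case True
      then have "(\<Prod>x\<in>N. ?f x) = (\<Prod>x\<in>N. q)"
        by (intro prod.cong) auto
      then show ?thesis
        using True by simp
    next
      case False
      then have "(\<Prod>x\<in>N. ?f x) = 0"
        using \<open>finite N\<close> by (intro prod_zero) auto
      then show ?thesis
        using False by simp
    qed
    ultimately show "(\<Prod>x\<in>N. ?f x) * (\<Prod>x\<in>A - N. 1 - q) = subset_weight q A N * of_bool (N \<inter> T = {})"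
      by (simp add: subset_weight_def mult_ac)
  qed
  finally show ?thesis ..
qed

lemma sum_subset_weight:
  "finite A \<Longrightarrow> (\<Sum>N\<in>Pow A. subset_weight q A N) = 1"
  using sum_subset_weight_avoiding[of A "{}" q] by simp

lemma sum_subset_weight_hitting:
  assumes "finite A" and "T \<subseteq> A"
  shows "(\<Sum>N\<in>Pow A. subset_weight q A N * of_bool (N \<inter> T \<noteq> {})) = 1 - (1 - q) ^ card T"
proof -
  have "(\<Sum>N\<in>Pow A. subset_weight q A N * of_bool (N \<inter> T \<noteq> {}))
      = (\<Sum>N\<in>Pow A. subset_weight q A N - subset_weight q A N * of_bool (N \<inter> T = {}))"
    by (intro sum.cong) auto
  then show ?thesis
    by (simp only: sum_subtractf sum_subset_weight[OF assms(1)] sum_subset_weight_avoiding[OF assms])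
qed

lemma finite_agents [simp]: "finite (agents n)"
  and card_agents [simp]: "card (agents n) = n"
  by (auto simp: agents_def)

lemma Pneedy_eq_subset_weight:
  "Pneedy n q g = (\<Sum>N\<in>Pow (agents n). subset_weight q (agents n) N * (\<Sum>i\<in>N. g N i))"
  by (simp add: Pneedy_def subset_weight_def)

lemma sum_offdiag_swap:
  assumes "finite A"
  shows "(\<Sum>i\<in>A. \<Sum>j\<in>A - {i}. f i j) = (\<Sum>i\<in>A. \<Sum>j\<in>A - {i}. f j i)"
proof -
  have offdiag: "A - {i} = {j \<in> A. j \<noteq> i}" for i
    by auto
  show ?thesis
    unfolding offdiag using sum.swap_restrict[OF assms assms, of f "\<lambda>i j. j \<noteq> i"]
    by (simp add: eq_commute[of i j for i j :: 'a])
qed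

lemma sum_offdiag_const:
  assumes "finite A"
  shows "(\<Sum>i\<in>A. \<Sum>j\<in>A - {i}. c) = of_nat (card A) * (of_nat (card A) - 1) * (c :: 'a::comm_ring_1)"
proof -
  have "(\<Sum>j\<in>A - {i}. c) = (of_nat (card A) - 1) * c" if "i \<in> A" for i
  proof -
    have "1 \<le> card A"
      using that assms by (auto simp: Suc_le_eq card_gt_0_iff)
    then show ?thesis
      using that assms by (simp add: card_Diff_singleton of_nat_diff)
  qed
  then show ?thesis
    by (simp add: sum_distrib_left)
qed

lemma sum_shares_le_hitting_pairs:
  fixes f :: "'a \<Rightarrow> 'a \<Rightarrow> real"
  assumes "finite A" and "N \<subseteq> A"
    and shares: "\<And>i j. f i j + f j i = 1" and nonneg: "\<And>i j. 0 \<le> f i j"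
  shows "2 * (\<Sum>i\<in>N. \<Sum>j\<in>A - {i}. f i j) \<le> (\<Sum>i\<in>A. \<Sum>j\<in>A - {i}. of_bool (N \<inter> {i, j} \<noteq> {}))"
proof -
  define h where "h i j = of_bool (i \<in> N) * f i j" for i j
  have "(\<Sum>i\<in>N. \<Sum>j\<in>A - {i}. f i j) = (\<Sum>i\<in>A. \<Sum>j\<in>A - {i}. h i j)"
    using assms(1,2) by (simp add: h_def sum.If_cases Int_absorb1 flip: sum_distrib_left)
  then have "2 * (\<Sum>i\<in>N. \<Sum>j\<in>A - {i}. f i j) = (\<Sum>i\<in>A. \<Sum>j\<in>A - {i}. h i j + h j i)"
    using sum_offdiag_swap[OF \<open>finite A\<close>, of h] by (simp add: sum.distrib)
  also have "\<dots> \<le> (\<Sum>i\<in>A. \<Sum>j\<in>A - {i}. of_bool (N \<inter> {i, j} \<noteq> {}))"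
  proof (intro sum_mono)
    fix i j
    show "h i j + h j i \<le> of_bool (N \<inter> {i, j} \<noteq> {})"
      using shares[of i j] nonneg[of i j] nonneg[of j i] by (auto simp: h_def)
  qed
  finally show ?thesis .
qed

lemma gpair_swap: "gpair n G N i j + gpair n G N j i = 1"
  by (auto simp: gpair_def)

lemma gpair_nonneg: "0 \<le> gpair n G N i j"
  by (auto simp: gpair_def)

lemma PD_le:
  assumes "n \<ge> 2" and "0 \<le> q" and "q \<le> 1"
  shows "PD n q G \<le> 1 - (1 - q) ^ 2"
proof -
  let ?A = "agents n" and ?w = "subset_weight q (agents n)"
  define c where "c = 1 / (real n * (real n - 1))"
  have "c \<ge> 0"
    using assms(1) by (simp add: c_def)
  have "PD n q G = (\<Sum>N\<in>Pow ?A. ?w N * (c * (2 * (\<Sum>i\<in>N. \<Sum>j\<in>?A - {i}. gpair n G N i j))))"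
    by (simp add: PD_def Pneedy_eq_subset_weight gD_def c_def sum_distrib_left)
  also have "\<dots> \<le> (\<Sum>N\<in>Pow ?A. ?w N * (c * (\<Sum>i\<in>?A. \<Sum>j\<in>?A - {i}. of_bool (N \<inter> {i, j} \<noteq> {}))))"
    using \<open>c \<ge> 0\<close> assms(2,3)
    by (intro sum_mono mult_left_mono subset_weight_nonneg sum_shares_le_hitting_pairs gpair_swap gpair_nonneg)
      auto
  also have "\<dots> = c * (\<Sum>i\<in>?A. \<Sum>j\<in>?A - {i}. \<Sum>N\<in>Pow ?A. ?w N * of_bool (N \<inter> {i, j} \<noteq> {}))"
    by (simp add: sum_distrib_left sum_distrib_right mult_ac sum.swap[of _ "Pow ?A"])
  also have "\<dots> = c * (\<Sum>i\<in>?A. \<Sum>j\<in>?A - {i}. 1 - (1 - q) ^ 2)"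
  proof -
    have "(\<Sum>N\<in>Pow ?A. ?w N * of_bool (N \<inter> {i, j} \<noteq> {})) = 1 - (1 - q) ^ 2"
      if "i \<in> ?A" and "j \<in> ?A - {i}" for i j
      using sum_subset_weight_hitting[of ?A "{i, j}" q] that by (simp add: power2_eq_square)
    then show ?thesis
      by simp
  qed
  also have "\<dots> = 1 - (1 - q) ^ 2"
    using assms(1) by (simp add: sum_offdiag_const c_def)
  finally show ?thesis .
qed

definition choice_tier :: "nat \<Rightarrow> (nat \<Rightarrow> nat \<Rightarrow> relation) \<Rightarrow> nat \<Rightarrow> nat set" where
  "choice_tier n G j =
    (if Fr n G j \<noteq> {} then Fr n G j else if Im n G j \<noteq> {} then Im n G j else En n G j)"

lemma choice_set_eq_tier:
  "choice_set n G N j =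
    (if choice_tier n G j \<inter> N \<noteq> {} then choice_tier n G j \<inter> N else choice_tier n G j)"
  by (simp add: choice_set_def choice_tier_def Let_def)

lemma choice_tier_subset: "choice_tier n G j \<subseteq> agents n - {j}"
  by (auto simp: choice_tier_def Fr_def Im_def En_def)

lemma sum_uniform_on_subset:
  assumes "finite N" and "C \<subseteq> N" and "C \<noteq> {}"
  shows "(\<Sum>i\<in>N. if i \<in> C then 1 / real (card C) else 0) = 1"
  using assms by (simp add: sum.If_cases Int_absorb1 finite_subset)

lemma hit_le_choice_shares:
  assumes "N \<subseteq> agents n"
  shows "of_bool (N \<inter> choice_tier n G j \<noteq> {})
    \<le> (\<Sum>i\<in>N - {j}. if i \<in> choice_set n G N j then 1 / real (card (choice_set n G N j)) else 0)"
proof (cases "N \<inter> choice_tier n G j = {}")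
  case False
  let ?C = "choice_set n G N j"
  have "?C = choice_tier n G j \<inter> N"
    using False by (simp add: choice_set_eq_tier Int_commute)
  then have "?C \<subseteq> N - {j}" and "?C \<noteq> {}"
    using False choice_tier_subset[of n G j] by auto
  moreover have "finite (N - {j})"
    using finite_subset[OF assms finite_agents] by simp
  ultimately have "(\<Sum>i\<in>N - {j}. if i \<in> ?C then 1 / real (card ?C) else 0) = 1"
    by (intro sum_uniform_on_subset)
  then show ?thesis
    using False by simp
qed (simp add: sum_nonneg)

lemma hit_average_le_sum_gR:
  assumes "N \<subseteq> agents n"
  shows "(\<Sum>j\<in>agents n. of_bool (N \<inter> choice_tier n G j \<noteq> {})) / real n \<le> (\<Sum>i\<in>N. gR n G N i)"
proof -
  let ?t = "\<lambda>i j. if i \<in> choice_set n G N j then 1 / real (card (choice_set n G N j)) else 0"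
  have "finite N"
    using finite_subset[OF assms finite_agents] .
  have "(\<Sum>j\<in>agents n. of_bool (N \<inter> choice_tier n G j \<noteq> {})) \<le> (\<Sum>j\<in>agents n. \<Sum>i\<in>N - {j}. ?t i j)"
    using assms by (intro sum_mono hit_le_choice_shares)
  also have "\<dots> = (\<Sum>i\<in>N. \<Sum>j\<in>agents n - {i}. ?t i j)"
  proof -
    have "agents n - {i} = {j \<in> agents n. i \<noteq> j}" and "N - {i} = {j \<in> N. j \<noteq> i}" for i
      by auto
    then show ?thesis
      using sum.swap_restrict[OF \<open>finite N\<close> finite_agents, where g = ?t and R = "\<lambda>i j. i \<noteq> j"] by simp
  qed
  moreover have "(\<Sum>i\<in>N. gR n G N i) = (\<Sum>i\<in>N. \<Sum>j\<in>agents n - {i}. ?t i j) / real n"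
    by (simp add: gR_def sum_divide_distrib)
  ultimately show ?thesis
    by (simp add: divide_right_mono)
qed

lemma PR_ge:
  assumes "n \<ge> 1" and "0 \<le> q" and "q \<le> 1"
    and tiers: "\<And>j. j \<in> agents n \<Longrightarrow> 2 \<le> card (choice_tier n G j)"
  shows "1 - (1 - q) ^ 2 \<le> PR n q G"
proof -
  let ?A = "agents n" and ?w = "subset_weight q (agents n)"
  let ?hit = "\<lambda>N j. of_bool (N \<inter> choice_tier n G j \<noteq> {}) :: real"
  have "1 - (1 - q) ^ 2 = (\<Sum>j\<in>?A. 1 - (1 - q) ^ 2) / real n"
    using assms(1) by simp
  also have "\<dots> \<le> (\<Sum>j\<in>?A. 1 - (1 - q) ^ card (choice_tier n G j)) / real n"
    using assms(2,3) tiers by (intro divide_right_mono sum_mono diff_mono power_decreasing) auto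
  also have "\<dots> = (\<Sum>j\<in>?A. \<Sum>N\<in>Pow ?A. ?w N * ?hit N j) / real n"
  proof -
    have "choice_tier n G j \<subseteq> ?A" for j
      using choice_tier_subset by blast
    then have "(\<Sum>N\<in>Pow ?A. ?w N * ?hit N j) = 1 - (1 - q) ^ card (choice_tier n G j)" for j
      by (rule sum_subset_weight_hitting[OF finite_agents])
    then show ?thesis
      by simp
  qed
  also have "\<dots> = (\<Sum>N\<in>Pow ?A. ?w N * ((\<Sum>j\<in>?A. ?hit N j) / real n))"
    by (subst sum.swap) (simp only: sum_divide_distrib times_divide_eq_right sum_distrib_left)
  also have "\<dots> \<le> (\<Sum>N\<in>Pow ?A. ?w N * (\<Sum>i\<in>N. gR n G N i))"
    using assms(2,3) by (intro sum_mono mult_left_mono subset_weight_nonneg hit_average_le_sum_gR) auto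
  also have "\<dots> = PR n q G"
    by (simp add: PR_def Pneedy_eq_subset_weight)
  finally show ?thesis .
qed

lemma card_choice_tier_ge_2:
  assumes "n \<ge> 3" and "j \<in> agents n"
    and "2 \<le> card (Fr n G j) \<or> (Fr n G j = {} \<and> 2 \<le> card (Im n G j)) \<or> En n G j = agents n - {j}"
  shows "2 \<le> card (choice_tier n G j)"
proof -
  consider (friends) "2 \<le> card (Fr n G j)"
    | (impartials) "Fr n G j = {}" and "2 \<le> card (Im n G j)"
    | (enemies) "En n G j = agents n - {j}"
    using assms(3) by blast
  then show ?thesis
  proof cases
    case friends
    then have "Fr n G j \<noteq> {}"
      by auto
    with friends show ?thesis
      by (simp add: choice_tier_def)
  next
    case impartials
    then have "Im n G j \<noteq> {}"
      by auto
    with impartials show ?thesis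
      by (simp add: choice_tier_def)
  next
    case enemies
    have "Fr n G j \<inter> En n G j = {}" and "Im n G j \<inter> En n G j = {}"
      and "Fr n G j \<subseteq> agents n - {j}" and "Im n G j \<subseteq> agents n - {j}"
      by (auto simp: Fr_def Im_def En_def)
    then have "Fr n G j = {}" and "Im n G j = {}"
      using enemies by blast+
    moreover have "card (agents n - {j}) = n - 1"
      using assms(2) by simp
    ultimately show ?thesis
      using assms(1) enemies by (simp add: choice_tier_def)
  qed
qed

theorem mainTheorem7:
  fixes n :: nat and q :: real and G :: "nat \<Rightarrow> nat \<Rightarrow> relation"
  assumes "n \<ge> 3" and "0 < q" and "q < 1" and "network n G"
  shows "PD n q G \<le> 1 - (1 - q) ^ 2
    \<and> ((\<forall>j \<in> agents n. card (Fr n G j) \<ge> 2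
          \<or> (Fr n G j = {} \<and> card (Im n G j) \<ge> 2)
          \<or> En n G j = agents n - {j})
        \<longrightarrow> PR n q G \<ge> PD n q G)"
proof (intro conjI impI)
  show PD: "PD n q G \<le> 1 - (1 - q) ^ 2"
    using assms by (intro PD_le) auto
  assume "\<forall>j \<in> agents n. card (Fr n G j) \<ge> 2
          \<or> (Fr n G j = {} \<and> card (Im n G j) \<ge> 2)
          \<or> En n G j = agents n - {j}"
  then have "1 - (1 - q) ^ 2 \<le> PR n q G"
    using assms by (intro PR_ge card_choice_tier_ge_2) auto
  with PD show "PR n q G \<ge> PD n q G"
    by linarith
qed

end
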